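(* Let $\mathcal M$ be an oriented matroid on ground set $E$ and $e\in E$. (1) If $e$ is a loop, then $\mathcal M$ is pure if and only if $\mathcal M\setminus e$ is pure. (2) If $e$ is a coloop, then $\mathcal M$ is pure if and only if $\mathcal M/e$ is pure.
   Context: Oriented matroids are given by signed circuits $X=(X^+,X^-)$ on $E$. $e$ is a loop if $(\{e\},\emptyset)$ is a circuit; $e$ is a coloop if $e$ lies in the support $X^+\cup X^-$ of no circuit. Deletion $\mathcal M\setminus e$: circuits of $\mathcal M$ not containing $e$ in their support, on ground set $E\setminus\{e\}$. Contraction $\mathcal M/e$ (for $e$ not a loop): the circuits are the inclusion-minimal (w.r.t. $Y\le X$ iff $Y^+\subseteq X^+$ and $Y^-\subseteq X^-$) nonempty signed sets among $(X^+\setminus\{e\},X^-\setminus\{e\})$, $X$ a circuit of $\mathcal M$. Two subsets $I,J$ are separated if no circuit $X$ satisfies $X^+\subseteq I\setminus J$, $X^-\subseteq J\setminus I$; an oriented matroid is pure if every pairwise-separated collection maximal by inclusion has the maximum possible cardinality. *)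

theory Defs
  imports Main
begin

text \<open>A signed set is a pair (positive part, negative part).\<close>
type_synonym 'a sset = "'a set \<times> 'a set"

definition supp :: "'a sset \<Rightarrow> 'a set" where
  "supp X = fst X \<union> snd X"

definition sneg :: "'a sset \<Rightarrow> 'a sset" where
  "sneg X = (snd X, fst X)"

text \<open>Oriented matroid on finite ground set E given by its set of signed circuits
  (circuit axioms C0--C3, with weak elimination).\<close>
definition oriented_matroid :: "'a set \<Rightarrow> 'a sset set \<Rightarrow> bool" where
  "oriented_matroid E \<C> \<longleftrightarrow>
     finite E \<and>
     (\<forall>X\<in>\<C>. fst X \<inter> snd X = {} \<and> supp X \<subseteq> E) \<and>
     ({}, {}) \<notin> \<C> \<and>
     (\<forall>X\<in>\<C>. sneg X \<in> \<C>) \<and>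
     (\<forall>X\<in>\<C>. \<forall>Y\<in>\<C>. supp X \<subseteq> supp Y \<longrightarrow> X = Y \<or> X = sneg Y) \<and>
     (\<forall>X\<in>\<C>. \<forall>Y\<in>\<C>. \<forall>e. X \<noteq> sneg Y \<and> e \<in> fst X \<inter> snd Y \<longrightarrow>
        (\<exists>Z\<in>\<C>. fst Z \<subseteq> (fst X \<union> fst Y) - {e} \<and> snd Z \<subseteq> (snd X \<union> snd Y) - {e}))"

definition is_loop :: "'a sset set \<Rightarrow> 'a \<Rightarrow> bool" where
  "is_loop \<C> e \<longleftrightarrow> ({e}, {}) \<in> \<C>"

definition is_coloop :: "'a sset set \<Rightarrow> 'a \<Rightarrow> bool" where
  "is_coloop \<C> e \<longleftrightarrow> (\<forall>X\<in>\<C>. e \<notin> supp X)"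

definition sle :: "'a sset \<Rightarrow> 'a sset \<Rightarrow> bool" where
  "sle Y X \<longleftrightarrow> fst Y \<subseteq> fst X \<and> snd Y \<subseteq> snd X"

definition deletion :: "'a sset set \<Rightarrow> 'a \<Rightarrow> 'a sset set" where
  "deletion \<C> e = {X \<in> \<C>. e \<notin> supp X}"

definition contraction :: "'a sset set \<Rightarrow> 'a \<Rightarrow> 'a sset set" where
  "contraction \<C> e =
     (let S = {(fst X - {e}, snd X - {e}) | X. X \<in> \<C>} - {({}, {})}
      in {Y \<in> S. \<forall>Z\<in>S. sle Z Y \<longrightarrow> Z = Y})"

definition separated :: "'a sset set \<Rightarrow> 'a set \<Rightarrow> 'a set \<Rightarrow> bool" where
  "separated \<C> I J \<longleftrightarrow> \<not> (\<exists>X\<in>\<C>. fst X \<subseteq> I - J \<and> snd X \<subseteq> J - I)"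

definition sep_collection :: "'a set \<Rightarrow> 'a sset set \<Rightarrow> 'a set set \<Rightarrow> bool" where
  "sep_collection E \<C> \<S> \<longleftrightarrow>
     \<S> \<subseteq> Pow E \<and> (\<forall>I\<in>\<S>. \<forall>J\<in>\<S>. I \<noteq> J \<longrightarrow> separated \<C> I J)"

definition maximal_sep_collection :: "'a set \<Rightarrow> 'a sset set \<Rightarrow> 'a set set \<Rightarrow> bool" where
  "maximal_sep_collection E \<C> \<S> \<longleftrightarrow>
     sep_collection E \<C> \<S> \<and> (\<forall>\<T>. sep_collection E \<C> \<T> \<and> \<S> \<subseteq> \<T> \<longrightarrow> \<T> = \<S>)"

definition pure :: "'a set \<Rightarrow> 'a sset set \<Rightarrow> bool" where
  "pure E \<C> \<longleftrightarrow>
     (\<forall>\<S>. maximal_sep_collection E \<C> \<S> \<longrightarrow>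
        card \<S> = Max (card ` {\<T>. sep_collection E \<C> \<T>}))"

end

theory Submission
  imports Defs
begin

text \<open>A coloop lies in no circuit, so separation ignores it, and two sets that differ only
  at the coloop are separated; hence the maximal separated collections of \<open>\<M>\<close> are exactly
  the collections \<open>\<T> \<union> {K \<union> {e} | K \<in> \<T>}\<close> for the maximal ones \<open>\<T>\<close> of \<open>\<M>/e = \<M>\<close>, and all
  cardinalities double. For a loop, the circuits \<open>\<plusminus>({e},\<emptyset>)\<close> force the members of a separated
  collection to agree at \<open>e\<close>, and apart from that separation is separation in \<open>\<M>\<setminus>e\<close>; so
  the maximal collections of \<open>\<M>\<close> are those of \<open>\<M>\<setminus>e\<close>, possibly with \<open>e\<close> added to every
  member, of the same cardinality.\<close>

definition inclusion_maximal :: "('a set \<Rightarrow> bool) \<Rightarrow> 'a set \<Rightarrow> bool" where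
  "inclusion_maximal P S \<longleftrightarrow> P S \<and> (\<forall>S'. P S' \<and> S \<subseteq> S' \<longrightarrow> S' = S)"

definition pure_family :: "('a set \<Rightarrow> bool) \<Rightarrow> bool" where
  "pure_family P \<longleftrightarrow> (\<forall>S. inclusion_maximal P S \<longrightarrow> card S = Max (card ` Collect P))"

lemma inclusion_maximalI:
  "P S \<Longrightarrow> (\<And>S'. P S' \<Longrightarrow> S \<subseteq> S' \<Longrightarrow> S' = S) \<Longrightarrow> inclusion_maximal P S"
  by (auto simp: inclusion_maximal_def)

lemma inclusion_maximalD:
  assumes "inclusion_maximal P S"
  shows "P S" and "P S' \<Longrightarrow> S \<subseteq> S' \<Longrightarrow> S' = S"
  using assms by (auto simp: inclusion_maximal_def)

lemma pure_iff_pure_family: "pure E C \<longleftrightarrow> pure_family (sep_collection E C)"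
  by (simp add: pure_def pure_family_def maximal_sep_collection_def inclusion_maximal_def)

lemma pure_family_transfer:
  fixes P :: "'a set \<Rightarrow> bool" and Q :: "'b set \<Rightarrow> bool" and k :: nat
  assumes fin: "finite (Collect P)" "finite (Collect Q)" and "Q {}" and "k > 0"
    and F: "\<And>T. Q T \<Longrightarrow> P (F T) \<and> card (F T) = k * card T"
    and F_maximal: "\<And>T. inclusion_maximal Q T \<Longrightarrow> inclusion_maximal P (F T)"
    and G: "\<And>S. P S \<Longrightarrow> Q (G S) \<and> card S \<le> k * card (G S)"
    and G_maximal: "\<And>S. inclusion_maximal P S \<Longrightarrow>
                       inclusion_maximal Q (G S) \<and> card S = k * card (G S)"
  shows "pure_family P \<longleftrightarrow> pure_family Q"
proof -
  define mP where "mP = Max (card ` Collect P)"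
  define mQ where "mQ = Max (card ` Collect Q)"
  have le_mP: "card S \<le> mP" if "P S" for S using fin that by (simp add: mP_def)
  have le_mQ: "card T \<le> mQ" if "Q T" for T using fin that by (simp add: mQ_def)
  have max_eq: "mP = k * mQ"
  proof (rule antisym)
    obtain S where "P S" "card S = mP"
      using Max_in[of "card ` Collect P"] fin F[OF \<open>Q {}\<close>] unfolding mP_def by fastforce
    then show "mP \<le> k * mQ" using G le_mQ by (metis le_trans mult_le_mono2)
  next
    obtain T where "Q T" "card T = mQ"
      using Max_in[of "card ` Collect Q"] fin \<open>Q {}\<close> unfolding mQ_def by fastforce
    then show "k * mQ \<le> mP" using F le_mP by metis
  qed
  show ?thesis
    unfolding pure_family_def mP_def[symmetric] mQ_def[symmetric]
  proof (intro iffI allI impI)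
    fix T assume "\<forall>S. inclusion_maximal P S \<longrightarrow> card S = mP" and "inclusion_maximal Q T"
    then have "k * card T = k * mQ"
      using F F_maximal max_eq by (metis inclusion_maximal_def)
    then show "card T = mQ" using \<open>k > 0\<close> by simp
  next
    fix S assume "\<forall>T. inclusion_maximal Q T \<longrightarrow> card T = mQ" and "inclusion_maximal P S"
    then show "card S = mP" using G_maximal max_eq by metis
  qed
qed

lemma finite_sep_collections: "finite E \<Longrightarrow> finite (Collect (sep_collection E C))"
  by (rule finite_subset[of _ "Pow (Pow E)"]) (auto simp: sep_collection_def, blast)

lemma sep_collection_empty: "sep_collection E C {}"
  by (simp add: sep_collection_def)

lemma sep_collection_image_Diff_singleton:
  assumes "sep_collection E C S"
    and "\<And>I J. separated C I J \<Longrightarrow> separated C' (I - {e}) (J - {e})"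
  shows "sep_collection (E - {e}) C' ((\<lambda>I. I - {e}) ` S)"
  using assms unfolding sep_collection_def by blast

lemma separated_Diff_singleton_iff:
  assumes "\<forall>X\<in>C. e \<notin> supp X"
  shows "separated C (I - {e}) (J - {e}) \<longleftrightarrow> separated C I J"
proof -
  have "fst X \<subseteq> I - J \<longleftrightarrow> fst X \<subseteq> (I - {e}) - (J - {e})"
       "snd X \<subseteq> J - I \<longleftrightarrow> snd X \<subseteq> (J - {e}) - (I - {e})" if "X \<in> C" for X
    using assms that by (auto simp: supp_def)
  then show ?thesis unfolding separated_def by blast
qed

subsection \<open>Coloops\<close>

lemma contraction_coloop:
  assumes om: "oriented_matroid E C" and "is_coloop C e"
  shows "contraction C e = C"
proof -
  have "(fst X - {e}, snd X - {e}) = X" if "X \<in> C" for X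
    using assms(2) that by (auto simp: is_coloop_def supp_def prod_eq_iff)
  moreover have "({}, {}) \<notin> C" using om by (simp add: oriented_matroid_def)
  ultimately have restricted: "{(fst X - {e}, snd X - {e}) | X. X \<in> C} - {({}, {})} = C"
    by (auto simp del: prod.collapse) (metis prod.collapse)+
  have "Z = Y" if "Y \<in> C" "Z \<in> C" "sle Z Y" for Y Z
  proof -
    have "supp Z \<subseteq> supp Y" using \<open>sle Z Y\<close> by (auto simp: sle_def supp_def)
    then have "Z = Y \<or> Z = sneg Y" using om that(1,2) unfolding oriented_matroid_def by blast
    moreover have "Z \<noteq> sneg Y"
    proof
      assume "Z = sneg Y"
      then have "fst Y = snd Y" using \<open>sle Z Y\<close> by (auto simp: sle_def sneg_def)
      moreover have "fst Y \<inter> snd Y = {}" "Y \<noteq> ({}, {})"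
        using om \<open>Y \<in> C\<close> by (auto simp: oriented_matroid_def)
      ultimately show False by (simp add: prod_eq_iff)
    qed
    ultimately show ?thesis by blast
  qed
  then show ?thesis unfolding contraction_def Let_def restricted by auto
qed

lemma separated_if_Diff_singleton_eq:
  assumes "({}, {}) \<notin> C" and "is_coloop C e" and "I - {e} = J - {e}"
  shows "separated C I J"
  unfolding separated_def
proof
  assume "\<exists>X\<in>C. fst X \<subseteq> I - J \<and> snd X \<subseteq> J - I"
  then obtain X where "X \<in> C" "fst X \<subseteq> I - J" "snd X \<subseteq> J - I" by blast
  moreover have "I - J \<subseteq> {e}" "J - I \<subseteq> {e}" using assms(3) by blast+
  moreover have "e \<notin> fst X" "e \<notin> snd X" using assms(2) \<open>X \<in> C\<close> by (auto simp: is_coloop_def supp_def)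
  ultimately have "X = ({}, {})" by (auto simp: prod_eq_iff)
  then show False using assms(1) \<open>X \<in> C\<close> by simp
qed

definition extensions :: "'a \<Rightarrow> 'a set set \<Rightarrow> 'a set set" where
  "extensions e T = T \<union> insert e ` T"

lemma mem_extensions_if_Diff_singleton_mem:
  assumes "I - {e} \<in> T"
  shows "I \<in> extensions e T"
proof (cases "e \<in> I")
  case True
  then have "I = insert e (I - {e})" by blast
  then show ?thesis using assms unfolding extensions_def by (metis UnI2 image_eqI)
next
  case False
  then show ?thesis using assms by (simp add: extensions_def)
qed

lemma mem_extensions_iff:
  assumes "\<forall>K\<in>T. e \<notin> K"
  shows "I \<in> extensions e T \<longleftrightarrow> I - {e} \<in> T"
  using assms mem_extensions_if_Diff_singleton_mem[of I e T]
  unfolding extensions_def by (auto simp: Diff_insert_absorb)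

lemma subset_extensions_image_Diff_singleton: "S \<subseteq> extensions e ((\<lambda>I. I - {e}) ` S)"
  by (auto intro: mem_extensions_if_Diff_singleton_mem)

lemma image_Diff_singleton_extensions:
  assumes "\<forall>K\<in>T. e \<notin> K"
  shows "(\<lambda>I. I - {e}) ` extensions e T = T"
proof -
  have "K - {e} = K" "insert e K - {e} = K" if "K \<in> T" for K
    using assms that by auto
  then show ?thesis unfolding extensions_def image_Un image_image by simp
qed

lemma extensions_mono: "T \<subseteq> T' \<Longrightarrow> extensions e T \<subseteq> extensions e T'"
  by (auto simp: extensions_def)

lemma card_extensions:
  assumes "finite T" and "\<forall>K\<in>T. e \<notin> K"
  shows "card (extensions e T) = 2 * card T"
proof -
  have "inj_on (insert e) T" using assms(2) by (metis Diff_insert_absorb inj_onI)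
  moreover have "T \<inter> insert e ` T = {}" using assms(2) by auto
  ultimately show ?thesis
    unfolding extensions_def using assms(1) by (simp add: card_Un_disjoint card_image)
qed

lemma sep_collection_extensions:
  assumes "({}, {}) \<notin> C" and "is_coloop C e" and "e \<in> E"
    and "sep_collection (E - {e}) C T"
  shows "sep_collection E C (extensions e T)"
proof -
  have T: "T \<subseteq> Pow (E - {e})" and sep_T: "\<forall>I\<in>T. \<forall>J\<in>T. I \<noteq> J \<longrightarrow> separated C I J"
    using assms(4) by (simp_all add: sep_collection_def)
  then have no_e: "\<forall>K\<in>T. e \<notin> K" by blast
  have "separated C I J" if "I \<in> extensions e T" "J \<in> extensions e T" for I J
  proof (cases "I - {e} = J - {e}")
    case True
    then show ?thesis by (rule separated_if_Diff_singleton_eq[OF assms(1,2)])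
  next
    case False
    have "I - {e} \<in> T" "J - {e} \<in> T" using that mem_extensions_iff[OF no_e] by blast+
    then have "separated C (I - {e}) (J - {e})" using sep_T False by simp
    then show ?thesis
      using separated_Diff_singleton_iff[of C e] assms(2) unfolding is_coloop_def by simp
  qed
  moreover have "extensions e T \<subseteq> Pow E"
    using T assms(3) unfolding extensions_def by blast
  ultimately show ?thesis by (simp add: sep_collection_def)
qed

lemma pure_coloop_iff:
  assumes "finite E" and "({}, {}) \<notin> C" and "is_coloop C e" and "e \<in> E"
  shows "pure E C \<longleftrightarrow> pure (E - {e}) C"
proof -
  let ?P = "sep_collection E C" and ?Q = "sep_collection (E - {e}) C"
  let ?G = "(`) (\<lambda>I. I - {e})"
  have no_e: "\<forall>K\<in>T. e \<notin> K" if "?Q T" for T using that by (auto simp: sep_collection_def)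
  have F: "?P (extensions e T)" if "?Q T" for T
    using sep_collection_extensions[OF assms(2-4) that] .
  have G: "?Q (?G S)" if "?P S" for S
    using sep_collection_image_Diff_singleton[OF that] assms(3) separated_Diff_singleton_iff[of C e]
    unfolding is_coloop_def by blast
  have G_F: "?G (extensions e T) = T" if "?Q T" for T
    using image_Diff_singleton_extensions[OF no_e[OF that]] .
  have finite_P: "finite S" if "?P S" for S
    using that assms(1) finite_subset by (fastforce simp: sep_collection_def)
  have card_F: "card (extensions e T) = 2 * card T" if "?Q T" for T
    using card_extensions[OF _ no_e[OF that]] finite_P[OF F[OF that]]
    unfolding extensions_def by simp
  have maximal_eq: "extensions e (?G S) = S" if "inclusion_maximal ?P S" for S
    using inclusion_maximalD[OF that] F[OF G] subset_extensions_image_Diff_singleton[of S e] by blast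
  have "pure_family ?P \<longleftrightarrow> pure_family ?Q"
  proof (rule pure_family_transfer[where F = "extensions e" and G = ?G and k = 2])
    show "finite (Collect ?P)" "finite (Collect ?Q)"
      using assms(1) finite_sep_collections by auto
    show "?Q {}" by (rule sep_collection_empty)
    show "?Q T \<Longrightarrow> ?P (extensions e T) \<and> card (extensions e T) = 2 * card T" for T
      using F card_F by blast
    show "inclusion_maximal ?P (extensions e T)" if max: "inclusion_maximal ?Q T" for T
    proof (rule inclusion_maximalI)
      show "?P (extensions e T)" using F inclusion_maximalD(1)[OF max] .
      fix S' assume "?P S'" and ext_le: "extensions e T \<subseteq> S'"
      have "T = ?G (extensions e T)" using G_F inclusion_maximalD(1)[OF max] by simp
      also have "\<dots> \<subseteq> ?G S'" using ext_le by (rule image_mono)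
      finally have "?G S' = T" using inclusion_maximalD(2)[OF max G[OF \<open>?P S'\<close>]] by simp
      then have "S' \<subseteq> extensions e T" using subset_extensions_image_Diff_singleton[of S' e] by simp
      with ext_le show "S' = extensions e T" by (rule subset_antisym[rotated])
    qed
    show "?Q (?G S) \<and> card S \<le> 2 * card (?G S)" if "?P S" for S
    proof
      show "?Q (?G S)" using G[OF that] .
      have "card S \<le> card (extensions e (?G S))"
        using card_mono[OF finite_P[OF F[OF G[OF that]]] subset_extensions_image_Diff_singleton] .
      then show "card S \<le> 2 * card (?G S)" using card_F[OF G[OF that]] by simp
    qed
    show "inclusion_maximal ?Q (?G S) \<and> card S = 2 * card (?G S)"
      if max: "inclusion_maximal ?P S" for S
    proof
      have Q_G: "?Q (?G S)" using G inclusion_maximalD(1)[OF max] .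
      show "inclusion_maximal ?Q (?G S)"
      proof (rule inclusion_maximalI[where P = ?Q, OF Q_G])
        fix T' assume "?Q T'" and "?G S \<subseteq> T'"
        then have "S \<subseteq> extensions e T'"
          using maximal_eq[OF max] extensions_mono[of "?G S" T' e] by simp
        then have "extensions e T' = S" by (rule inclusion_maximalD(2)[OF max F[OF \<open>?Q T'\<close>]])
        then show "T' = ?G S" using G_F[OF \<open>?Q T'\<close>] by simp
      qed
      show "card S = 2 * card (?G S)" using card_F[OF Q_G] maximal_eq[OF max] by simp
    qed
  qed simp
  then show ?thesis by (simp add: pure_iff_pure_family)
qed

subsection \<open>Loops\<close>

lemma circuit_through_loop:
  assumes om: "oriented_matroid E C" and "is_loop C e" and "X \<in> C" and "e \<in> supp X"
  shows "X = ({e}, {}) \<or> X = ({}, {e})"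
proof -
  have "({e}, {}) \<in> C" "supp ({e}, {}) \<subseteq> supp X"
    using assms(2,4) by (simp_all add: is_loop_def supp_def)
  then have "({e}, {}) = X \<or> ({e}, {}) = sneg X"
    using om \<open>X \<in> C\<close> unfolding oriented_matroid_def by blast
  then show ?thesis by (cases X) (auto simp: sneg_def)
qed

lemma separated_loop_iff:
  assumes om: "oriented_matroid E C" and loop: "is_loop C e"
  shows "separated C I J \<longleftrightarrow> (e \<in> I \<longleftrightarrow> e \<in> J) \<and> separated (deletion C e) (I - {e}) (J - {e})"
proof -
  have pos: "({e}, {}) \<in> C" using loop by (simp add: is_loop_def)
  then have neg: "({}, {e}) \<in> C" using om unfolding oriented_matroid_def sneg_def by force
  have deletion_iff: "separated (deletion C e) (I - {e}) (J - {e}) \<longleftrightarrow> separated (deletion C e) I J"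
    by (rule separated_Diff_singleton_iff) (simp add: deletion_def)
  show ?thesis
  proof
    assume sep: "separated C I J"
    then have "e \<in> I \<longleftrightarrow> e \<in> J" using pos neg unfolding separated_def by fastforce
    moreover have "separated (deletion C e) I J" using sep unfolding separated_def deletion_def by blast
    ultimately show "(e \<in> I \<longleftrightarrow> e \<in> J) \<and> separated (deletion C e) (I - {e}) (J - {e})"
      using deletion_iff by simp
  next
    assume "(e \<in> I \<longleftrightarrow> e \<in> J) \<and> separated (deletion C e) (I - {e}) (J - {e})"
    then have agree: "e \<in> I \<longleftrightarrow> e \<in> J" and sep_del: "separated (deletion C e) I J"
      using deletion_iff by simp_all
    show "separated C I J" unfolding separated_def
    proof
      assume "\<exists>X\<in>C. fst X \<subseteq> I - J \<and> snd X \<subseteq> J - I"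
      then obtain X where X: "X \<in> C" "fst X \<subseteq> I - J" "snd X \<subseteq> J - I" by blast
      show False
      proof (cases "e \<in> supp X")
        case True
        then show False using circuit_through_loop[OF om loop X(1)] X agree by auto
      next
        case False
        then show False using sep_del X unfolding separated_def deletion_def by blast
      qed
    qed
  qed
qed

lemma sep_collection_loop_agree:
  assumes "oriented_matroid E C" and "is_loop C e"
    and "sep_collection E C S" and "I \<in> S" and "J \<in> S"
  shows "e \<in> I \<longleftrightarrow> e \<in> J"
  using assms(3-5) separated_loop_iff[OF assms(1,2)] unfolding sep_collection_def by blast

lemma sep_collection_deletion_loop:
  assumes "oriented_matroid E C" and "is_loop C e" and "e \<in> E"
    and "sep_collection (E - {e}) (deletion C e) T"
  shows "sep_collection E C T" and "sep_collection E C (insert e ` T)"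
proof -
  have T: "T \<subseteq> Pow (E - {e})"
    and sep_T: "\<forall>I\<in>T. \<forall>J\<in>T. I \<noteq> J \<longrightarrow> separated (deletion C e) I J"
    using assms(4) by (simp_all add: sep_collection_def)
  have Diff_e: "K - {e} = K" "insert e K - {e} = K" if "K \<in> T" for K
    using T that by auto
  have "separated C I J" if "I \<in> T" "J \<in> T" "I \<noteq> J" for I J
    using separated_loop_iff[OF assms(1,2)] sep_T that Diff_e T by auto
  then show "sep_collection E C T" using T by (auto simp: sep_collection_def)
  have "separated C (insert e I) (insert e J)" if "I \<in> T" "J \<in> T" "I \<noteq> J" for I J
    using separated_loop_iff[OF assms(1,2)] sep_T that Diff_e by auto
  then show "sep_collection E C (insert e ` T)" using T assms(3) by (auto simp: sep_collection_def)
qed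

lemma pure_loop_iff:
  assumes "oriented_matroid E C" and "is_loop C e" and "e \<in> E"
  shows "pure E C \<longleftrightarrow> pure (E - {e}) (deletion C e)"
proof -
  let ?P = "sep_collection E C" and ?Q = "sep_collection (E - {e}) (deletion C e)"
  let ?G = "(`) (\<lambda>I. I - {e})"
  have finite_E: "finite E" using assms(1) by (simp add: oriented_matroid_def)
  have no_e: "\<forall>K\<in>T. e \<notin> K" if "?Q T" for T using that by (auto simp: sep_collection_def)
  have G_insert: "?G (insert e ` T) = T" if "?Q T" for T
    using no_e[OF that] by (force simp: image_image)
  note lift = sep_collection_deletion_loop[OF assms]
  note agree = sep_collection_loop_agree[OF assms(1,2)]
  have G: "?Q (?G S)" if "?P S" for S
    using sep_collection_image_Diff_singleton[OF that] separated_loop_iff[OF assms(1,2)] by blast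
  have card_G: "card (?G S) = card S" if "?P S" for S
  proof (rule card_image, rule inj_onI)
    fix I J assume "I \<in> S" "J \<in> S" "I - {e} = J - {e}"
    then show "I = J" using agree[OF that \<open>I \<in> S\<close> \<open>J \<in> S\<close>] by blast
  qed
  have P_cases: "S = ?G S \<or> S = insert e ` ?G S" if "?P S" for S
  proof (cases "\<exists>I\<in>S. e \<in> I")
    case True
    then have "\<forall>I\<in>S. e \<in> I" using agree[OF that] by blast
    then have "S = insert e ` ?G S" by (force simp: image_image insert_absorb)
    then show ?thesis ..
  next
    case False
    then show ?thesis by (force simp: image_image)
  qed
  have "pure_family ?P \<longleftrightarrow> pure_family ?Q"
  proof (rule pure_family_transfer[where F = id and G = ?G and k = 1])
    show "finite (Collect ?P)" "finite (Collect ?Q)"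
      using finite_E finite_sep_collections by auto
    show "?Q {}" by (rule sep_collection_empty)
    show "?Q T \<Longrightarrow> ?P (id T) \<and> card (id T) = 1 * card T" for T
      using lift(1) by simp
    show "inclusion_maximal ?P (id T)" if max: "inclusion_maximal ?Q T" for T
    proof -
      have "?Q {{}}" by (simp add: sep_collection_def)
      then have "T \<noteq> {}" using inclusion_maximalD(2)[OF max] by blast
      then obtain K where "K \<in> T" by blast
      have "inclusion_maximal ?P T"
      proof (rule inclusion_maximalI[where P = ?P])
        show "?P T" using lift(1) inclusion_maximalD(1)[OF max] .
        fix S' assume "?P S'" and "T \<subseteq> S'"
        then have "\<forall>I\<in>S'. e \<notin> I"
          using agree \<open>K \<in> T\<close> no_e inclusion_maximalD(1)[OF max] by blast
        then have "?G S' = S'" by force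
        then show "S' = T" using inclusion_maximalD(2)[OF max] G[OF \<open>?P S'\<close>] \<open>T \<subseteq> S'\<close> by simp
      qed
      then show ?thesis by simp
    qed
    show "?Q (?G S) \<and> card S \<le> 1 * card (?G S)" if "?P S" for S
      using G[OF that] card_G[OF that] by simp
    show "inclusion_maximal ?Q (?G S) \<and> card S = 1 * card (?G S)"
      if max: "inclusion_maximal ?P S" for S
    proof
      have Q_G: "?Q (?G S)" using G inclusion_maximalD(1)[OF max] .
      show "inclusion_maximal ?Q (?G S)"
      proof (rule inclusion_maximalI[where P = ?Q, OF Q_G])
        fix T' assume "?Q T'" and GS_le: "?G S \<subseteq> T'"
        from P_cases[OF inclusion_maximalD(1)[OF max]] show "T' = ?G S"
        proof
          assume "S = ?G S"
          then show ?thesis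
            using inclusion_maximalD(2)[OF max lift(1)[OF \<open>?Q T'\<close>]] GS_le by simp
        next
          assume "S = insert e ` ?G S"
          then have "S \<subseteq> insert e ` T'" using GS_le by blast
          then have "insert e ` T' = S"
            by (rule inclusion_maximalD(2)[OF max lift(2)[OF \<open>?Q T'\<close>]])
          then show ?thesis using G_insert[OF \<open>?Q T'\<close>] by simp
        qed
      qed
      show "card S = 1 * card (?G S)" using card_G inclusion_maximalD(1)[OF max] by simp
    qed
  qed simp
  then show ?thesis by (simp add: pure_iff_pure_family)
qed

theorem lemma8p1:
  fixes E :: "'a set" and \<C> :: "'a sset set" and e :: 'a
  assumes "oriented_matroid E \<C>" and "e \<in> E"
  shows "(is_loop \<C> e \<longrightarrow> (pure E \<C> \<longleftrightarrow> pure (E - {e}) (deletion \<C> e)))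
       \<and> (is_coloop \<C> e \<longrightarrow> (pure E \<C> \<longleftrightarrow> pure (E - {e}) (contraction \<C> e)))"
proof (intro conjI impI)
  show "pure E \<C> \<longleftrightarrow> pure (E - {e}) (deletion \<C> e)" if "is_loop \<C> e"
    using pure_loop_iff[OF assms(1) that assms(2)] .
  show "pure E \<C> \<longleftrightarrow> pure (E - {e}) (contraction \<C> e)" if "is_coloop \<C> e"
  proof -
    have "finite E" and "({}, {}) \<notin> \<C>" using assms(1) by (simp_all add: oriented_matroid_def)
    then show ?thesis
      using pure_coloop_iff[OF _ _ that assms(2)] contraction_coloop[OF assms(1) that] by simp
  qed
qed

end
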